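(* Let $n\ge4$, $x_1,\dots,x_{n-1}>0$, $\gamma,\delta>0$ with $\gamma\ne1\ne\delta$, $x_0=1$, and let $\mathbf{P}$ be the $n\times n$ matrix with entries $p_{ij}=x_{j-1}/x_{i-1}$ except $p_{12}=\delta x_1$, $p_{21}=1/(\delta x_1)$, $p_{13}=\gamma x_2$, $p_{31}=1/(\gamma x_2)$. Let $\mathbf{w}^{EM}$ be the principal right eigenvector of $\mathbf{P}$. Then $\delta<\gamma$ iff $w_2^{EM}/w_3^{EM}>x_2/x_1$; $\delta=\gamma$ iff $w_2^{EM}/w_3^{EM}=x_2/x_1$; and $\delta>\gamma$ iff $w_2^{EM}/w_3^{EM}<x_2/x_1$.
   Context: The principal right eigenvector is the positive (Perron) eigenvector belonging to the largest eigenvalue. *)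

theory Defs
  imports "HOL-Analysis.Analysis"
begin

text \<open>Square matrices of size n are represented as functions nat => nat => real,
  with rows and columns indexed by 1..n (only these entries are relevant).\<close>

definition pert_matrix :: "(nat \<Rightarrow> real) \<Rightarrow> real \<Rightarrow> real \<Rightarrow> nat \<Rightarrow> nat \<Rightarrow> real" where
  "pert_matrix x \<gamma> \<delta> i j =
     (if i = 1 \<and> j = 2 then \<delta> * x 1
      else if i = 2 \<and> j = 1 then 1 / (\<delta> * x 1)
      else if i = 1 \<and> j = 3 then \<gamma> * x 2
      else if i = 3 \<and> j = 1 then 1 / (\<gamma> * x 2)
      else x (j - 1) / x (i - 1))"

definition is_eigenvalue :: "nat \<Rightarrow> (nat \<Rightarrow> nat \<Rightarrow> real) \<Rightarrow> complex \<Rightarrow> bool" where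
  "is_eigenvalue n P \<mu> \<longleftrightarrow>
     (\<exists>v :: nat \<Rightarrow> complex. (\<exists>i\<in>{1..n}. v i \<noteq> 0) \<and>
        (\<forall>i\<in>{1..n}. (\<Sum>j=1..n. complex_of_real (P i j) * v j) = \<mu> * v i))"

definition principal_right_eigenvector :: "nat \<Rightarrow> (nat \<Rightarrow> nat \<Rightarrow> real) \<Rightarrow> (nat \<Rightarrow> real) \<Rightarrow> bool" where
  "principal_right_eigenvector n P w \<longleftrightarrow>
     (\<forall>i\<in>{1..n}. w i > 0) \<and>
     (\<exists>lam::real. (\<forall>i\<in>{1..n}. (\<Sum>j=1..n. P i j * w j) = lam * w i) \<and>
        (\<forall>\<mu>. is_eigenvalue n P \<mu> \<longrightarrow> cmod \<mu> \<le> lam))"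

end

theory Submission
  imports Defs
begin

text \<open>Rows 2 and 3 of the perturbed matrix, scaled by \<open>x 1\<close> and \<open>x 2\<close>, coincide outside
  column 1, where they are \<open>1/\<delta>\<close> and \<open>1/\<gamma>\<close>. Subtracting the two eigen-equations therefore gives
  \<open>\<lambda> (x\<^sub>1 w\<^sub>2 - x\<^sub>2 w\<^sub>3) = w\<^sub>1 (1/\<delta> - 1/\<gamma>)\<close>, and since \<open>\<lambda>, w\<^sub>1 > 0\<close> the sign of
  \<open>w\<^sub>2/w\<^sub>3 - x\<^sub>2/x\<^sub>1\<close> is that of \<open>\<gamma> - \<delta>\<close>. Only positivity of the eigenvector is used: neither
  the dominance of the eigenvalue nor \<open>\<gamma>, \<delta> \<noteq> 1\<close> matter, and \<open>n \<ge> 3\<close> suffices.\<close>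

lemma pert_matrix_pos:
  assumes "\<forall>k\<in>{0..n-1}. x k > 0" and "\<gamma> > 0" and "\<delta> > 0"
    and "i \<in> {1..n}" and "j \<in> {1..n}"
  shows "pert_matrix x \<gamma> \<delta> i j > 0"
  using assms by (auto simp: pert_matrix_def)

lemma eigenvalue_pos_of_positive_row:
  fixes P :: "nat \<Rightarrow> nat \<Rightarrow> real"
  assumes "\<forall>j\<in>{1..n}. P i j > 0" and "\<forall>j\<in>{1..n}. w j > 0" and "n \<ge> 1"
    and "(\<Sum>j=1..n. P i j * w j) = lam * w i" and "w i > 0"
  shows "lam > 0"
proof -
  have "(\<Sum>j=1..n. P i j * w j) > 0"
    using assms(1-3) by (intro sum_pos) auto
  with assms(4,5) show ?thesis by (simp add: zero_less_mult_iff)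
qed

lemma pert_matrix_row2_scaled:
  assumes "x 1 \<noteq> 0" and "j \<ge> 2"
  shows "x 1 * pert_matrix x \<gamma> \<delta> 2 j = x (j - 1)"
  using assms by (simp add: pert_matrix_def)

lemma pert_matrix_row3_scaled:
  assumes "x 2 \<noteq> 0" and "j \<ge> 2"
  shows "x 2 * pert_matrix x \<gamma> \<delta> 3 j = x (j - 1)"
  using assms by (simp add: pert_matrix_def)

lemma pert_matrix_rows23_diff:
  assumes "n \<ge> 3" and "x 1 \<noteq> 0" and "x 2 \<noteq> 0" and "\<gamma> \<noteq> 0" and "\<delta> \<noteq> 0"
  shows "x 1 * (\<Sum>j=1..n. pert_matrix x \<gamma> \<delta> 2 j * w j)
           - x 2 * (\<Sum>j=1..n. pert_matrix x \<gamma> \<delta> 3 j * w j)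
         = w 1 * (1/\<delta> - 1/\<gamma>)"
proof -
  let ?P = "pert_matrix x \<gamma> \<delta>"
  have split: "(\<Sum>j=1..n. f j) = f 1 + (\<Sum>j=2..n. f j)" for f :: "nat \<Rightarrow> real"
    using assms(1) sum.atLeast_Suc_atMost[of 1 n f] by (simp add: numeral_2_eq_2)
  have tail: "x 1 * (\<Sum>j=2..n. ?P 2 j * w j) = x 2 * (\<Sum>j=2..n. ?P 3 j * w j)"
    unfolding sum_distrib_left
  proof (intro sum.cong refl)
    fix j assume "j \<in> {2..n}"
    then show "x 1 * (?P 2 j * w j) = x 2 * (?P 3 j * w j)"
      using pert_matrix_row2_scaled[where x = x, OF assms(2)] pert_matrix_row3_scaled[where x = x, OF assms(3)]
      by (metis atLeastAtMost_iff mult.assoc)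
  qed
  have "x 1 * ?P 2 1 = 1/\<delta>" and "x 2 * ?P 3 1 = 1/\<gamma>"
    using assms(2,3) by (simp_all add: pert_matrix_def)
  then show ?thesis
    using tail split[of "\<lambda>j. ?P 2 j * w j"] split[of "\<lambda>j. ?P 3 j * w j"]
    by (simp add: algebra_simps)
qed

lemma sgn_eigenvector_ratio:
  assumes "n \<ge> 3" and "\<forall>k\<in>{0..n-1}. x k > 0" and "\<gamma> > 0" and "\<delta> > 0"
    and "\<forall>i\<in>{1..n}. w i > 0"
    and "\<forall>i\<in>{1..n}. (\<Sum>j=1..n. pert_matrix x \<gamma> \<delta> i j * w j) = lam * w i"
  shows "sgn (w 2 / w 3 - x 2 / x 1) = sgn (\<gamma> - \<delta>)"
proof -
  have x1: "x 1 > 0" and x2: "x 2 > 0" and w1: "w 1 > 0" and w3: "w 3 > 0"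
    using assms(1,2,5) by auto
  have "lam > 0"
  proof (rule eigenvalue_pos_of_positive_row[where i = 1])
    show "\<forall>j\<in>{1..n}. pert_matrix x \<gamma> \<delta> 1 j > 0"
      using assms(1) pert_matrix_pos[OF assms(2-4)] by auto
  qed (use assms(1,5,6) in auto)
  have "lam * (x 1 * w 2 - x 2 * w 3) = w 1 * (1/\<delta> - 1/\<gamma>)"
  proof -
    have "x 1 * (lam * w 2) - x 2 * (lam * w 3) = w 1 * (1/\<delta> - 1/\<gamma>)"
      using pert_matrix_rows23_diff[of n x \<gamma> \<delta> w] assms(1,3,4,6) x1 x2 by simp
    then show ?thesis by (simp add: algebra_simps)
  qed
  then have "sgn (x 1 * w 2 - x 2 * w 3) = sgn (1/\<delta> - 1/\<gamma>)"
    using \<open>lam > 0\<close> w1 by (metis sgn_mult sgn_pos mult_1)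
  moreover have "w 2 / w 3 - x 2 / x 1 = (x 1 * w 2 - x 2 * w 3) / (x 1 * w 3)"
    using x1 w3 by (simp add: field_simps)
  moreover have "1/\<delta> - 1/\<gamma> = (\<gamma> - \<delta>) / (\<gamma> * \<delta>)"
    using assms(3,4) by (simp add: field_simps)
  ultimately show ?thesis
    using x1 w3 assms(3,4) by (simp add: sgn_mult)
qed

theorem mainTheorem9:
  fixes n :: nat and x :: "nat \<Rightarrow> real" and \<gamma> \<delta> :: real and w :: "nat \<Rightarrow> real"
  assumes "n \<ge> 4"
    and "\<forall>k\<in>{1..n-1}. x k > 0"
    and "x 0 = 1"
    and "\<gamma> > 0" and "\<delta> > 0" and "\<gamma> \<noteq> 1" and "\<delta> \<noteq> 1"
    and "principal_right_eigenvector n (pert_matrix x \<gamma> \<delta>) w"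
  shows "(\<delta> < \<gamma> \<longleftrightarrow> w 2 / w 3 > x 2 / x 1)
       \<and> (\<delta> = \<gamma> \<longleftrightarrow> w 2 / w 3 = x 2 / x 1)
       \<and> (\<delta> > \<gamma> \<longleftrightarrow> w 2 / w 3 < x 2 / x 1)"
proof -
  have "\<forall>k\<in>{0..n-1}. x k > 0"
  proof
    fix k :: nat assume "k \<in> {0..n-1}"
    then show "x k > 0"
      using assms(2,3) by (cases "k = 0") auto
  qed
  moreover obtain lam where "\<forall>i\<in>{1..n}. w i > 0"
    and "\<forall>i\<in>{1..n}. (\<Sum>j=1..n. pert_matrix x \<gamma> \<delta> i j * w j) = lam * w i"
    using assms(8) unfolding principal_right_eigenvector_def by blast
  ultimately have "sgn (w 2 / w 3 - x 2 / x 1) = sgn (\<gamma> - \<delta>)"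
    using assms(1,4,5) by (intro sgn_eigenvector_ratio) auto
  then show ?thesis
    by (auto simp: sgn_if split: if_splits)
qed

end
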